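(* Let $\tau>0$ and let $f\in C(\mathbb R\times\mathbb R,\mathbb R)$ satisfy: (1) $f$ is asymptotically $\tau$-periodic in time; (2) $f$ is positively regular; (3) for some $u_0\in\mathbb R$ the solution $\varphi(t,u_0,f)$ of $x'=f(t,x)$, $x(0)=u_0$, is bounded on $\mathbb R_+=[0,\infty)$. Then $\varphi(t,u_0,f)$ is $S$-asymptotically $\tau$-periodic, i.e. $\lim_{t\to+\infty}|\varphi(t+\tau,u_0,f)-\varphi(t,u_0,f)|=0$.
   Context: $C(\mathbb R\times\mathbb R,\mathbb R)$ is the space of continuous functions $\mathbb R\times\mathbb R\to\mathbb R$ with the compact-open topology (uniform convergence on compact sets). For $h\in\mathbb R$, $f^h(t,x):=f(t+h,x)$. $H^+(f)$ denotes the closure in $C(\mathbb R\times\mathbb R,\mathbb R)$ of $\{f^h:\ h\ge 0\}$. $f$ is called positively regular if for every $g\in H^+(f)$ and every $v\in\mathbb R$ the equation $y'=g(t,y)$ has a unique solution $\varphi(t,v,g)$ with $\varphi(0,v,g)=v$, and it is defined on all of $\mathbb R_+$. $f$ is called asymptotically $\tau$-periodic in time if $f=P+R$ with $P,R\in C(\mathbb R\times\mathbb R,\mathbb R)$, $P(t+\tau,x)=P(t,x)$ for all $(t,x)$, and $\lim_{t\to+\infty}R(t,x)=0$ uniformly in $x$ on every compact subset of $\mathbb R$. *)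

theory Defs
  imports "HOL-Analysis.Analysis"
begin

definition cont2 :: "(real \<Rightarrow> real \<Rightarrow> real) \<Rightarrow> bool" where
  "cont2 f \<longleftrightarrow> continuous_on UNIV (\<lambda>(t, x). f t x)"

definition tshift :: "(real \<Rightarrow> real \<Rightarrow> real) \<Rightarrow> real \<Rightarrow> (real \<Rightarrow> real \<Rightarrow> real)" where
  "tshift f h = (\<lambda>t x. f (t + h) x)"

text \<open>H^+(f): closure of {f^h : h >= 0} in C(R x R, R) with the compact-open topology,
  i.e. the topology of uniform convergence on compact sets. The basic neighbourhoods of a
  continuous g are {k. sup over K of |k - g| < e} for K compact and e > 0.\<close>
definition Hplus :: "(real \<Rightarrow> real \<Rightarrow> real) \<Rightarrow> (real \<Rightarrow> real \<Rightarrow> real) set" where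
  "Hplus f = {g. cont2 g \<and>
     (\<forall>K :: (real \<times> real) set. \<forall>e>0. compact K \<longrightarrow>
        (\<exists>h\<ge>0. \<forall>(t, x)\<in>K. \<bar>tshift f h t x - g t x\<bar> < e))}"

definition is_sol :: "(real \<Rightarrow> real \<Rightarrow> real) \<Rightarrow> real set \<Rightarrow> (real \<Rightarrow> real) \<Rightarrow> bool" where
  "is_sol g I y \<longleftrightarrow> (\<forall>t\<in>I. (y has_real_derivative g t (y t)) (at t within I))"

definition uniq_global_sol :: "(real \<Rightarrow> real \<Rightarrow> real) \<Rightarrow> real \<Rightarrow> bool" where
  "uniq_global_sol g v \<longleftrightarrow>
     (\<exists>y. is_sol g {0..} y \<and> y 0 = v \<and>
        (\<forall>T>0. \<forall>z. is_sol g {0..T} z \<and> z 0 = v \<longrightarrow> (\<forall>t\<in>{0..T}. z t = y t)))"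

definition positively_regular :: "(real \<Rightarrow> real \<Rightarrow> real) \<Rightarrow> bool" where
  "positively_regular f \<longleftrightarrow> (\<forall>g\<in>Hplus f. \<forall>v. uniq_global_sol g v)"

definition phi :: "real \<Rightarrow> real \<Rightarrow> (real \<Rightarrow> real \<Rightarrow> real) \<Rightarrow> real" where
  "phi t v g = (SOME y. is_sol g {0..} y \<and> y 0 = v) t"

definition asymptotically_periodic :: "real \<Rightarrow> (real \<Rightarrow> real \<Rightarrow> real) \<Rightarrow> bool" where
  "asymptotically_periodic \<tau> f \<longleftrightarrow>
     (\<exists>P R. cont2 P \<and> cont2 R \<and> (\<forall>t x. f t x = P t x + R t x) \<and>
        (\<forall>t x. P (t + \<tau>) x = P t x) \<and>
        (\<forall>K. compact K \<longrightarrow>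
           (\<forall>e>0. \<exists>T. \<forall>t\<ge>T. \<forall>x\<in>K. \<bar>R t x\<bar> < e)))"

end

theory Submission
  imports Defs "HOL-Complex_Analysis.Great_Picard"
begin

text \<open>Write f = P + R and a n = phi(n \<tau>, u0, f). The periodic part P lies in H+(f), so P is
  regular, and its period map v \<mapsto> phi(\<tau>, v, P) is monotone (scalar solutions cannot cross)
  and continuous. By Arzela-Ascoli and uniqueness, along any sequence n_k \<rightarrow> \<infinity> with
  a (n_k) \<rightarrow> l the shifted orbit phi(n_k \<tau> + s, u0, f) converges to phi(s, l, P) uniformly for
  s \<in> [0, \<tau>]. Hence a (n+1) - phi(\<tau>, a n, P) \<rightarrow> 0; as the period map is monotone and (a n)
  is bounded, this forces a (n+1) - a n \<rightarrow> 0. Then along every such subsequence both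
  phi(n_k \<tau> + s, u0, f) and phi(n_k \<tau> + \<tau> + s, u0, f) tend to phi(s, l, P), which gives the
  claim uniformly over one period.\<close>

section \<open>Real sequences\<close>

lemma filterlim_sequentially_if_subseqs:
  fixes X :: "nat \<Rightarrow> 'a"
  assumes "\<And>r :: nat \<Rightarrow> nat. strict_mono r \<Longrightarrow>
    \<exists>r' :: nat \<Rightarrow> nat. strict_mono r' \<and> filterlim (\<lambda>n. X (r (r' n))) F sequentially"
  shows "filterlim X F sequentially"
proof (rule ccontr)
  assume "\<not> filterlim X F sequentially"
  then obtain P where "eventually P F" and "\<not> eventually (\<lambda>n. P (X n)) sequentially"
    unfolding filterlim_iff by blast
  obtain r :: "nat \<Rightarrow> nat" where r: "strict_mono r" and never: "\<And>n. \<not> P (X (r n))"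
    using not_eventually_sequentiallyD[OF \<open>\<not> eventually _ _\<close>] by blast
  obtain r' where "filterlim (\<lambda>n. X (r (r' n))) F sequentially" using assms[OF r] by blast
  with \<open>eventually P F\<close> have "eventually (\<lambda>n. P (X (r (r' n)))) sequentially"
    unfolding filterlim_iff by blast
  then show False using never by (simp add: eventually_sequentially)
qed

text \<open>An upward jump T (a n) \<ge> a n + c/2 traps the sequence above a n + c/4 from then on, because
  T is monotone and the errors are at most c/8; infinitely many such jumps would therefore push
  the sequence above every bound.\<close>
lemma bounded_mono_recursion_finitely_many_up_jumps:
  fixes a :: "nat \<Rightarrow> real" and T :: "real \<Rightarrow> real"
  assumes mono: "mono T" and bd: "\<And>n. \<bar>a n\<bar> \<le> M" and c: "c > 0"
    and err: "\<And>n. n \<ge> N \<Longrightarrow> \<bar>a (Suc n) - T (a n)\<bar> \<le> c/8"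
  shows "\<exists>K. \<forall>n\<ge>K. n \<ge> N \<longrightarrow> T (a n) < a n + c/2"
proof (rule ccontr)
  assume "\<not> ?thesis"
  then have jumps: "\<And>K. \<exists>n\<ge>K. n \<ge> N \<and> a n + c/2 \<le> T (a n)" by (auto simp: not_less)
  have trap: "a n + c/4 \<le> a m" if n: "n \<ge> N" "a n + c/2 \<le> T (a n)" and "m > n" for n m
    using \<open>m > n\<close>
  proof (induction m)
    case (Suc m)
    have step: "T (a m) - c/8 \<le> a (Suc m)" if "m \<ge> N"
      using err[OF that] by (simp only: abs_le_iff) linarith
    show ?case
    proof (cases "m = n")
      case True
      then show ?thesis using step n c by simp
    next
      case False
      with Suc have "a n + c/4 \<le> a m" "m \<ge> N" using n by auto
      then have "T (a n) \<le> T (a m)" using c by (intro monoD[OF mono]) linarith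
      then show ?thesis using step[OF \<open>m \<ge> N\<close>] n c by linarith
    qed
  qed simp
  have climb: "\<exists>n\<ge>N. a n + c/2 \<le> T (a n) \<and> -M + real j * c/4 \<le> a n" for j
  proof (induction j)
    case 0
    obtain n where "n \<ge> N" "a n + c/2 \<le> T (a n)" using jumps[of N] by blast
    moreover have "-M \<le> a n" using bd[of n] by (simp add: abs_le_iff)
    ultimately show ?case by auto
  next
    case (Suc j)
    then obtain n where n: "n \<ge> N" "a n + c/2 \<le> T (a n)" "-M + real j * c/4 \<le> a n" by blast
    obtain n' where n': "n' \<ge> Suc n" "a n' + c/2 \<le> T (a n')" using jumps[of "Suc n"] by blast
    have "a n + c/4 \<le> a n'" using trap[OF n(1,2)] n'(1) by simp
    with n n' show ?case by (intro exI[of _ n']) (auto simp: algebra_simps)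
  qed
  obtain j :: nat where "(2 * M + 1) / (c/4) < real j" using reals_Archimedean2 by blast
  then have "2 * M + 1 < real j * c/4" using c by (simp add: field_simps)
  moreover obtain n where "-M + real j * c/4 \<le> a n" using climb by blast
  ultimately show False using bd[of n] by (simp add: abs_le_iff)
qed

text \<open>A large increment forces a large jump of T, and by the previous lemma, applied to T and to
  its reflection x \<mapsto> -T(-x), such jumps eventually stop in both directions.\<close>
lemma bounded_mono_recursion_increments_tendsto_zero:
  fixes a :: "nat \<Rightarrow> real" and T :: "real \<Rightarrow> real"
  assumes mono: "mono T" and bd: "\<And>n. \<bar>a n\<bar> \<le> M"
    and lim: "(\<lambda>n. a (Suc n) - T (a n)) \<longlonglongrightarrow> 0"
  shows "(\<lambda>n. a (Suc n) - a n) \<longlonglongrightarrow> 0"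
proof (rule ccontr)
  assume "\<not> ?thesis"
  then obtain c where c: "c > 0" and big: "\<And>K. \<exists>n\<ge>K. c \<le> \<bar>a (Suc n) - a n\<bar>"
    unfolding LIMSEQ_iff by (auto simp: not_less)
  obtain N where N: "\<And>n. n \<ge> N \<Longrightarrow> \<bar>a (Suc n) - T (a n)\<bar> \<le> c/8"
    using lim c unfolding LIMSEQ_iff
    by (metis diff_zero divide_pos_pos less_imp_le real_norm_def zero_less_numeral)
  obtain K1 where up: "\<And>n. n \<ge> K1 \<Longrightarrow> n \<ge> N \<Longrightarrow> T (a n) < a n + c/2"
    using bounded_mono_recursion_finitely_many_up_jumps[of T a M c N] mono bd c N by blast
  have mono': "mono (\<lambda>x. - T (- x))" using mono by (auto simp: mono_def)
  have bd': "\<bar>- a n\<bar> \<le> M" for n using bd[of n] by simp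
  have N': "\<bar>- a (Suc n) - - T (- (- a n))\<bar> \<le> c/8" if "n \<ge> N" for n
    using N[OF that] by (simp add: abs_minus_commute)
  obtain K2 where down: "\<And>n. n \<ge> K2 \<Longrightarrow> n \<ge> N \<Longrightarrow> - T (- (- a n)) < - a n + c/2"
    using bounded_mono_recursion_finitely_many_up_jumps[of _ "\<lambda>n. - a n" M c N] mono' bd' c N'
    by blast
  obtain n where n: "n \<ge> max (max K1 K2) N" "c \<le> \<bar>a (Suc n) - a n\<bar>" using big by blast
  then have "T (a n) < a n + c/2" "a n - c/2 < T (a n)" "\<bar>a (Suc n) - T (a n)\<bar> \<le> c/8"
    using up[of n] down[of n] N[of n] by auto
  with n(2) c show False by linarith
qed

lemma tendsto_at_top_if_uniform_on_periods:
  fixes \<psi> :: "real \<Rightarrow> real"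
  assumes \<tau>: "\<tau> > 0"
    and u: "uniform_limit {0..\<tau>} (\<lambda>n s. \<psi> (real n * \<tau> + s)) (\<lambda>_. 0) sequentially"
  shows "(\<psi> \<longlongrightarrow> 0) at_top"
proof (rule tendstoI)
  fix e :: real assume "e > 0"
  then obtain N where N: "\<And>n s. n \<ge> N \<Longrightarrow> s \<in> {0..\<tau>} \<Longrightarrow> \<bar>\<psi> (real n * \<tau> + s)\<bar> < e"
    using u unfolding uniform_limit_sequentially_iff dist_real_def by fastforce
  have "\<bar>\<psi> t\<bar> < e" if t: "t \<ge> real N * \<tau>" for t
  proof -
    define n where "n = nat \<lfloor>t / \<tau>\<rfloor>"
    have "real N \<le> t / \<tau>" using t \<tau> by (simp add: field_simps)
    then have n: "n \<ge> N" "real n \<le> t / \<tau>" "t / \<tau> < real n + 1"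
      unfolding n_def by linarith+
    then have "t - real n * \<tau> \<in> {0..\<tau>}" using \<tau> by (auto simp: field_simps)
    from N[OF n(1) this] show ?thesis by simp
  qed
  then show "\<forall>\<^sub>F t in at_top. dist (\<psi> t) 0 < e"
    unfolding eventually_at_top_linorder by auto
qed

section \<open>Solutions of scalar equations\<close>

lemma is_sol_continuous_on: "is_sol g S y \<Longrightarrow> continuous_on S y"
  unfolding is_sol_def by (rule DERIV_continuous_on) auto

lemma is_sol_subset: "is_sol g S y \<Longrightarrow> S' \<subseteq> S \<Longrightarrow> is_sol g S' y"
  unfolding is_sol_def by (meson DERIV_subset subsetD)

lemma is_sol_tshift:
  assumes sol: "is_sol g {0..} y" and h: "h \<ge> 0"
  shows "is_sol (tshift g h) {0..} (\<lambda>t. y (t + h))"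
  unfolding is_sol_def tshift_def
proof
  fix t :: real assume t: "t \<in> {0..}"
  have "(y has_real_derivative g (t + h) (y (t + h))) (at (t + h) within {0..})"
    using sol t h unfolding is_sol_def by auto
  then have "(y has_real_derivative g (t + h) (y (t + h))) (at (t + h) within (\<lambda>s. s + h) ` {0..})"
    by (rule DERIV_subset) (use h in auto)
  from DERIV_image_chain[OF this DERIV_add[OF DERIV_ident DERIV_const]]
  show "((\<lambda>t. y (t + h)) has_real_derivative g (t + h) (y (t + h))) (at t within {0..})"
    by (simp add: o_def)
qed

lemma cont2_compose_curve:
  assumes "cont2 g" "continuous_on S z"
  shows "continuous_on S (\<lambda>s. g s (z s))"
proof -
  have "continuous_on S (\<lambda>s. (s, z s))" by (intro continuous_on_Pair continuous_on_id assms(2))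
  from continuous_on_compose2[OF assms(1)[unfolded cont2_def] this] show ?thesis by simp
qed

lemma cont2_tshift:
  assumes "cont2 g"
  shows "cont2 (tshift g h)"
proof -
  have "continuous_on UNIV (\<lambda>p :: real \<times> real. (fst p + h, snd p))" by (intro continuous_intros)
  from continuous_on_compose2[OF assms[unfolded cont2_def] this]
  show ?thesis unfolding cont2_def tshift_def by (simp add: split_beta)
qed

lemma
  assumes "uniq_global_sol g v"
  shows phi_is_sol: "is_sol g {0..} (\<lambda>t. phi t v g)"
    and phi_0: "phi 0 v g = v"
    and phi_unique: "T > 0 \<Longrightarrow> is_sol g {0..T} z \<Longrightarrow> z 0 = v \<Longrightarrow> t \<in> {0..T} \<Longrightarrow> z t = phi t v g"
proof -
  obtain y where y: "is_sol g {0..} y" "y 0 = v"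
    and uniq: "\<And>T z. T > 0 \<Longrightarrow> is_sol g {0..T} z \<Longrightarrow> z 0 = v \<Longrightarrow> \<forall>t\<in>{0..T}. z t = y t"
    using assms unfolding uniq_global_sol_def by blast
  have phi: "is_sol g {0..} (\<lambda>t. phi t v g) \<and> phi 0 v g = v"
    unfolding phi_def using someI[where P="\<lambda>y. is_sol g {0..} y \<and> y 0 = v"] y by blast
  then show "is_sol g {0..} (\<lambda>t. phi t v g)" "phi 0 v g = v" by auto
  assume "T > 0" "is_sol g {0..T} z" "z 0 = v" "t \<in> {0..T}"
  moreover have "is_sol g {0..T} (\<lambda>t. phi t v g)" using phi is_sol_subset by fastforce
  ultimately show "z t = phi t v g" using uniq phi by metis
qed

lemma is_sol_glue:
  assumes y1: "is_sol g {0..} y1" and y2: "is_sol g {0..} y2"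
    and t0: "0 \<le> t0" "t0 < t" and meet: "y1 t0 = y2 t0"
  shows "is_sol g {0..t} (\<lambda>s. if s \<in> {0..t0} then y1 s else y2 s)"
  unfolding is_sol_def has_real_derivative_iff_has_vector_derivative
proof
  fix s assume s: "s \<in> {0..t}"
  have closures: "closure {0..t0} \<inter> closure {t0<..t} = {t0}" using t0 by auto
  have "((\<lambda>s. if s \<in> {0..t0} then y1 s else y2 s) has_vector_derivative
      (if s \<in> {0..t0} then g s (y1 s) else g s (y2 s))) (at s within {0..t})"
  proof (rule has_vector_derivative_If_within_closures[where T="{t0<..t}"])
    show "s \<in> {0..t0} \<union> {t0<..t}" "{0..t} = {0..t0} \<union> {t0<..t}" using s t0 by auto
    have "{0..t0} \<union> closure {0..t0} \<inter> closure {t0<..t} = {0..t0}" using closures t0 by auto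
    then show "(y1 has_vector_derivative g s (y1 s))
        (at s within {0..t0} \<union> closure {0..t0} \<inter> closure {t0<..t})"
      if "s \<in> {0..t0} \<union> closure {0..t0} \<inter> closure {t0<..t}"
      using y1 that unfolding is_sol_def has_real_derivative_iff_has_vector_derivative
      by (auto intro: has_vector_derivative_within_subset)
    have "{t0<..t} \<union> closure {0..t0} \<inter> closure {t0<..t} = {t0..t}" using closures t0 by auto
    then show "(y2 has_vector_derivative g s (y2 s))
        (at s within {t0<..t} \<union> closure {0..t0} \<inter> closure {t0<..t})"
      if "s \<in> {t0<..t} \<union> closure {0..t0} \<inter> closure {t0<..t}"
      using y2 that t0 unfolding is_sol_def has_real_derivative_iff_has_vector_derivative
      by (metis atLeastAtMost_iff atLeast_iff atLeastatMost_subset_iff dual_order.trans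
          has_vector_derivative_within_subset order.refl subset_iff)
    show "y1 s = y2 s" "g s (y1 s) = g s (y2 s)" if "s \<in> closure {0..t0}" "s \<in> closure {t0<..t}"
      using that closures meet by (metis IntI singletonD)+
  qed
  then show "((\<lambda>s. if s \<in> {0..t0} then y1 s else y2 s) has_vector_derivative
      g s (if s \<in> {0..t0} then y1 s else y2 s)) (at s within {0..t})"
    by (cases "s \<in> {0..t0}") (simp_all only: if_True if_False)
qed

text \<open>Two solutions that crossed would meet at some time t0; following the upper one up to t0
  and the lower one afterwards gives a second solution through the upper initial value.\<close>
lemma phi_mono:
  assumes U: "\<And>v. uniq_global_sol g v" and vw: "v \<le> w" and t: "t \<ge> 0"
  shows "phi t v g \<le> phi t w g"
proof (rule ccontr)
  assume "\<not> ?thesis"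
  then have cross: "phi t w g < phi t v g" by simp
  have init: "phi 0 v g = v" "phi 0 w g = w" using phi_0[OF U] by simp_all
  have "t \<noteq> 0" using cross init vw by auto
  with t have "t > 0" by simp
  have sols: "is_sol g {0..} (\<lambda>s. phi s v g)" "is_sol g {0..} (\<lambda>s. phi s w g)"
    using phi_is_sol[OF U] by simp_all
  have "continuous_on {0..t} (\<lambda>s. phi s v g - phi s w g)"
    using sols by (intro continuous_on_diff is_sol_continuous_on) (auto elim: is_sol_subset)
  then obtain t0 where t0: "0 \<le> t0" "t0 \<le> t" "phi t0 v g - phi t0 w g = 0"
    using IVT'[of "\<lambda>s. phi s v g - phi s w g" 0 0 t] vw cross t init by auto
  with cross have "t0 < t" by (cases "t0 = t") auto
  let ?z = "\<lambda>s. if s \<in> {0..t0} then phi s v g else phi s w g"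
  have glued: "is_sol g {0..t} ?z" using is_sol_glue[OF sols t0(1) \<open>t0 < t\<close>] t0(3) by simp
  have "?z 0 = v" using t0 init by simp
  from phi_unique[OF U \<open>t > 0\<close> glued this] have "?z t = phi t v g" using t by simp
  then show False using cross \<open>t0 < t\<close> by simp
qed

lemma is_sol_lipschitz:
  assumes "is_sol g S y" "convex S" "\<And>t. t \<in> S \<Longrightarrow> \<bar>g t (y t)\<bar> \<le> C" "s \<in> S" "t \<in> S"
  shows "\<bar>y s - y t\<bar> \<le> C * \<bar>s - t\<bar>"
  using field_differentiable_bound[of S y "\<lambda>t. g t (y t)" C s t] assms
  unfolding is_sol_def by auto

lemma uniform_limit_along_curves:
  fixes gk :: "nat \<Rightarrow> real \<Rightarrow> real \<Rightarrow> real" and yk :: "nat \<Rightarrow> real \<Rightarrow> real"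
  assumes gc: "cont2 g"
    and gk: "uniform_limit ({0..T} \<times> {-B..B}) (\<lambda>k (t, x). gk k t x) (\<lambda>(t, x). g t x) sequentially"
    and bd: "\<And>k t. t \<in> {0..T} \<Longrightarrow> \<bar>yk k t\<bar> \<le> B"
    and yk: "uniform_limit {0..T} yk z sequentially"
  shows "uniform_limit {0..T} (\<lambda>k s. gk k s (yk k s)) (\<lambda>s. g s (z s)) sequentially"
proof -
  define Q where "Q = {0..T} \<times> {-B..B}"
  have z_bd: "\<bar>z t\<bar> \<le> B" if "t \<in> {0..T}" for t
    using uniform_limit_on_subset[OF yk, of "{t}"] that bd[OF that]
    by (intro LIMSEQ_le_const2[OF tendsto_rabs]) auto
  have curves_in_Q: "(s, yk k s) \<in> Q" "(s, z s) \<in> Q" if "s \<in> {0..T}" for s k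
    using bd[OF that, of k] z_bd[OF that] that unfolding Q_def by (auto simp: abs_le_iff)
  have "uniform_limit {0..T} (\<lambda>k s. gk k s (yk k s) - g s (yk k s)) (\<lambda>_. 0) sequentially"
  proof (rule uniform_limitI)
    fix e :: real assume "e > 0"
    from uniform_limitD[OF gk this] show "\<forall>\<^sub>F k in sequentially. \<forall>s\<in>{0..T}.
        dist (gk k s (yk k s) - g s (yk k s)) 0 < e"
      by eventually_elim (use curves_in_Q in \<open>force simp: Q_def dist_real_def\<close>)
  qed
  moreover have "uniform_limit {0..T} (\<lambda>k s. g s (yk k s)) (\<lambda>s. g s (z s)) sequentially"
  proof -
    have pairs: "uniform_limit {0..T} (\<lambda>k s. (s, yk k s)) (\<lambda>s. (s, z s)) sequentially"
    proof (rule uniform_limitI)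
      fix e :: real assume "e > 0"
      from uniform_limitD[OF yk this] show "\<forall>\<^sub>F k in sequentially. \<forall>s\<in>{0..T}.
          dist (s, yk k s) (s, z s) < e"
        by eventually_elim (simp add: dist_Pair_Pair)
    qed
    moreover have "uniformly_continuous_on Q (\<lambda>(t, x). g t x)"
      using gc unfolding cont2_def Q_def
      by (intro compact_uniformly_continuous compact_Times) (auto intro: continuous_on_subset)
    moreover have "\<forall>\<^sub>F k in sequentially. (\<lambda>s. (s, yk k s)) ` {0..T} \<subseteq> Q"
      using curves_in_Q by (auto intro!: always_eventually)
    moreover have "(\<lambda>s. (s, z s)) ` {0..T} \<subseteq> Q" using curves_in_Q by auto
    ultimately show ?thesis by (auto dest: uniform_limit_compose simp: o_def)
  qed
  ultimately show ?thesis using uniform_limit_add by fastforce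
qed

lemma is_sol_uniform_limit:
  fixes gk :: "nat \<Rightarrow> real \<Rightarrow> real \<Rightarrow> real" and yk :: "nat \<Rightarrow> real \<Rightarrow> real"
  assumes gc: "cont2 g" and gkc: "\<And>k. cont2 (gk k)"
    and gk: "uniform_limit ({0..T} \<times> {-B..B}) (\<lambda>k (t, x). gk k t x) (\<lambda>(t, x). g t x) sequentially"
    and sol: "\<And>k. is_sol (gk k) {0..T} (yk k)"
    and bd: "\<And>k t. t \<in> {0..T} \<Longrightarrow> \<bar>yk k t\<bar> \<le> B"
    and yk: "uniform_limit {0..T} yk z sequentially"
  shows "is_sol g {0..T} z"
proof -
  define G where "G s = g s (z s)" for s
  have slopes: "uniform_limit {0..T} (\<lambda>k s. gk k s (yk k s)) G sequentially"
    unfolding G_def by (rule uniform_limit_along_curves[OF gc gk bd yk])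
  have zc: "continuous_on {0..T} z"
    by (intro uniform_limit_theorem[OF _ yk] always_eventually allI is_sol_continuous_on[OF sol]) simp
  have pointwise: "(\<lambda>k. yk k t) \<longlonglongrightarrow> z t" if "t \<in> {0..T}" for t
    using uniform_limit_on_subset[OF yk, of "{t}"] that by simp
  have z_integral: "z t = z 0 + integral {0..t} G" if t: "t \<in> {0..T}" for t
  proof -
    have sub: "{0..t} \<subseteq> {0..T}" using t by auto
    obtain I J where I: "\<And>k. ((\<lambda>s. gk k s (yk k s)) has_integral I k) {0..t}"
      and J: "(G has_integral J) {0..t}" and IJ: "I \<longlonglongrightarrow> J"
      using uniform_limit_integral[OF uniform_limit_on_subset[OF slopes sub]]
        cont2_compose_curve[OF gkc is_sol_continuous_on[OF is_sol_subset[OF sol sub]]]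
      by auto
    have "((\<lambda>s. gk k s (yk k s)) has_integral (yk k t - yk k 0)) {0..t}" for k
      using is_sol_subset[OF sol sub, of k] t
      unfolding is_sol_def has_real_derivative_iff_has_vector_derivative
      by (intro fundamental_theorem_of_calculus) auto
    then have "I = (\<lambda>k. yk k t - yk k 0)" using I has_integral_unique by blast
    with IJ have "(\<lambda>k. yk k t - yk k 0) \<longlonglongrightarrow> J" by simp
    moreover have "(\<lambda>k. yk k t - yk k 0) \<longlonglongrightarrow> z t - z 0"
      using t by (intro tendsto_diff pointwise) auto
    ultimately have "z t - z 0 = J" using LIMSEQ_unique by blast
    with integral_unique[OF J] show ?thesis by linarith
  qed
  show ?thesis
    unfolding is_sol_def
  proof
    fix t assume t: "t \<in> {0..T}"
    have "((\<lambda>u. z 0 + integral {0..u} G) has_real_derivative G t) (at t within {0..T})"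
      using DERIV_add[OF DERIV_const integral_has_real_derivative[OF _ t]] cont2_compose_curve[OF gc zc]
      unfolding G_def by simp
    then have "(z has_real_derivative G t) (at t within {0..T})"
      by (rule has_field_derivative_transform_within[where d=1])
        (use t in \<open>auto simp: z_integral[symmetric]\<close>)
    then show "(z has_real_derivative g t (z t)) (at t within {0..T})" by (simp add: G_def)
  qed
qed

lemma is_sol_uniformly_convergent_subseq:
  fixes gk :: "nat \<Rightarrow> real \<Rightarrow> real \<Rightarrow> real" and yk :: "nat \<Rightarrow> real \<Rightarrow> real"
  assumes sol: "\<And>k. is_sol (gk k) {0..T} (yk k)"
    and bd: "\<And>k t. t \<in> {0..T} \<Longrightarrow> \<bar>yk k t\<bar> \<le> B"
    and slope: "\<And>k t. t \<in> {0..T} \<Longrightarrow> \<bar>gk k t (yk k t)\<bar> \<le> C"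
  obtains r z where "strict_mono r" "uniform_limit {0..T} (\<lambda>n. yk (r n)) z sequentially"
proof -
  define L where "L = \<bar>C\<bar> + 1"
  have L: "L > 0" "\<And>k s t. s \<in> {0..T} \<Longrightarrow> t \<in> {0..T} \<Longrightarrow> \<bar>yk k s - yk k t\<bar> \<le> L * \<bar>s - t\<bar>"
  proof -
    show "L > 0" unfolding L_def by simp
    fix k s t assume "s \<in> {0..T}" "t \<in> {0..T}"
    then have "\<bar>yk k s - yk k t\<bar> \<le> C * \<bar>s - t\<bar>"
      using is_sol_lipschitz[OF sol] slope by auto
    also have "\<dots> \<le> L * \<bar>s - t\<bar>" unfolding L_def by (intro mult_right_mono) auto
    finally show "\<bar>yk k s - yk k t\<bar> \<le> L * \<bar>s - t\<bar>" .
  qed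
  obtain z r where r: "strict_mono (r :: nat \<Rightarrow> nat)"
    and uc: "\<And>e. 0 < e \<Longrightarrow> \<exists>N. \<forall>n x. N \<le> n \<and> x \<in> {0..T} \<longrightarrow> norm (yk (r n) x - z x) < e"
  proof (rule Arzela_Ascoli[of "{0..T}" yk B])
    show "norm (yk n x) \<le> B" if "x \<in> {0..T}" for n x using bd[OF that] by simp
    show "\<exists>d>0. \<forall>n y. y \<in> {0..T} \<and> norm (x - y) < d \<longrightarrow> norm (yk n x - yk n y) < e"
      if "x \<in> {0..T}" "0 < e" for x e
    proof (intro exI[of _ "e / L"] conjI allI impI)
      fix n y assume y: "y \<in> {0..T} \<and> norm (x - y) < e / L"
      have "\<bar>yk n x - yk n y\<bar> \<le> L * \<bar>x - y\<bar>" using L(2) that(1) y by blast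
      also have "\<dots> < L * (e / L)" using y L(1) by (intro mult_strict_left_mono) auto
      finally show "norm (yk n x - yk n y) < e" using L(1) by simp
    qed (use that L(1) in simp)
  qed auto
  have "uniform_limit {0..T} (\<lambda>n. yk (r n)) z sequentially"
    unfolding uniform_limit_sequentially_iff dist_norm using uc by blast
  with r show thesis by (rule that)
qed

text \<open>Arzela-Ascoli gives every subsequence a uniformly convergent further subsequence; its limit
  solves the limit equation and hence equals psi by uniqueness.\<close>
lemma is_sol_uniform_convergence:
  fixes gk :: "nat \<Rightarrow> real \<Rightarrow> real \<Rightarrow> real" and yk :: "nat \<Rightarrow> real \<Rightarrow> real"
  assumes T: "T \<ge> 0" and gc: "cont2 g" and gkc: "\<And>k. cont2 (gk k)"
    and gk: "uniform_limit ({0..T} \<times> {-B..B}) (\<lambda>k (t, x). gk k t x) (\<lambda>(t, x). g t x) sequentially"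
    and sol: "\<And>k. is_sol (gk k) {0..T} (yk k)"
    and bd: "\<And>k t. t \<in> {0..T} \<Longrightarrow> \<bar>yk k t\<bar> \<le> B"
    and init: "(\<lambda>k. yk k 0) \<longlonglongrightarrow> v"
    and uniq: "\<And>z. is_sol g {0..T} z \<Longrightarrow> z 0 = v \<Longrightarrow> \<forall>t\<in>{0..T}. z t = psi t"
  shows "uniform_limit {0..T} yk psi sequentially"
proof (rule filterlim_sequentially_if_subseqs)
  fix r :: "nat \<Rightarrow> nat" assume r: "strict_mono r"
  define Q where "Q = {0..T} \<times> {-B..B}"
  have "compact ((\<lambda>(t, x). g t x) ` Q)"
    using gc unfolding cont2_def Q_def
    by (intro compact_continuous_image compact_Times) (auto intro: continuous_on_subset)
  then obtain C0 where "\<forall>y\<in>(\<lambda>(t, x). g t x) ` Q. norm y \<le> C0"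
    using compact_imp_bounded bounded_iff by metis
  then have C0: "\<And>p. p \<in> Q \<Longrightarrow> \<bar>(\<lambda>(t, x). g t x) p\<bar> \<le> C0" by auto
  obtain N where N: "\<And>k p. k \<ge> N \<Longrightarrow> p \<in> Q \<Longrightarrow> dist ((\<lambda>(t, x). gk k t x) p) ((\<lambda>(t, x). g t x) p) < 1"
    using uniform_limitD[OF gk zero_less_one] unfolding Q_def eventually_sequentially by blast
  have slope: "\<bar>gk (r (n + N)) t (yk (r (n + N)) t)\<bar> \<le> C0 + 1" if t: "t \<in> {0..T}" for n t
  proof -
    have "(t, yk (r (n + N)) t) \<in> Q"
      using bd[OF t, of "r (n + N)"] t unfolding Q_def by (auto simp: abs_le_iff)
    moreover have "r (n + N) \<ge> N" using seq_suble[OF r, of "n + N"] by simp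
    ultimately show ?thesis using N C0 unfolding dist_real_def by fastforce
  qed
  obtain r2 z where r2: "strict_mono r2"
    and z: "uniform_limit {0..T} (\<lambda>n. yk (r (r2 n + N))) z sequentially"
    using is_sol_uniformly_convergent_subseq[of "\<lambda>n. gk (r (n + N))" T "\<lambda>n. yk (r (n + N))" B]
      sol bd slope by metis
  define r' where "r' n = r2 n + N" for n
  have r': "strict_mono r'" using r2 unfolding r'_def strict_mono_def by simp
  have rr': "strict_mono (r \<circ> r')" using strict_mono_o[OF r r'] .
  have gk_sub: "uniform_limit ({0..T} \<times> {-B..B}) (\<lambda>n (t, x). gk (r (r' n)) t x) (\<lambda>(t, x). g t x)
      sequentially"
    using filterlim_compose[OF gk filterlim_subseq[OF rr']] by (simp add: o_def)
  have z_sol: "is_sol g {0..T} z"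
    using is_sol_uniform_limit[OF gc gkc gk_sub sol bd] z unfolding r'_def by simp
  have "(\<lambda>n. yk (r (r' n)) 0) \<longlonglongrightarrow> z 0"
    using uniform_limit_on_subset[OF z, of "{0}"] T unfolding r'_def by simp
  moreover have "(\<lambda>n. yk (r (r' n)) 0) \<longlonglongrightarrow> v"
    using LIMSEQ_subseq_LIMSEQ[OF init rr'] by (simp add: o_def)
  ultimately have "z 0 = v" using LIMSEQ_unique by blast
  with uniq z_sol have "\<forall>t\<in>{0..T}. z t = psi t" by blast
  then have "uniform_limit {0..T} (\<lambda>n. yk (r (r' n))) psi sequentially"
    using z uniform_limit_cong'[of "{0..T}" "\<lambda>n. yk (r (r' n))" "\<lambda>n. yk (r (r' n))" z psi]
    unfolding r'_def by simp
  then show "\<exists>r'. strict_mono r' \<and> uniform_limit {0..T} (\<lambda>n. yk (r (r' n))) psi sequentially"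
    using r' by blast
qed

lemma phi_bounded_on:
  assumes "uniq_global_sol g v"
  obtains B where "\<And>t. t \<in> {0..T} \<Longrightarrow> \<bar>phi t v g\<bar> \<le> B"
proof -
  have "bounded ((\<lambda>t. phi t v g) ` {0..T})"
    using phi_is_sol[OF assms]
    by (intro compact_imp_bounded compact_continuous_image is_sol_continuous_on)
      (auto elim: is_sol_subset)
  then obtain B where "\<forall>y\<in>(\<lambda>t. phi t v g) ` {0..T}. norm y \<le> B" unfolding bounded_iff by blast
  then show thesis by (intro that[of B]) auto
qed

lemma phi_continuous_initial:
  assumes U: "\<And>v. uniq_global_sol g v" and gc: "cont2 g" and T: "T > 0" and w: "w \<longlonglongrightarrow> v"
  shows "uniform_limit {0..T} (\<lambda>k t. phi t (w k) g) (\<lambda>t. phi t v g) sequentially"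
proof -
  obtain M where M: "\<And>k. \<bar>w k\<bar> \<le> M"
    using BseqE[OF convergent_imp_Bseq[OF convergentI[OF w]]] by (metis real_norm_def)
  obtain B1 B2 where "\<And>t. t \<in> {0..T} \<Longrightarrow> \<bar>phi t (-M) g\<bar> \<le> B1"
    and "\<And>t. t \<in> {0..T} \<Longrightarrow> \<bar>phi t M g\<bar> \<le> B2"
    using phi_bounded_on[OF U] by metis
  then have B: "\<bar>phi t (w k) g\<bar> \<le> max B1 B2" if "t \<in> {0..T}" for k t
    using phi_mono[OF U, of "-M" "w k" t] phi_mono[OF U, of "w k" M t] M[of k] that
    by (fastforce simp: abs_le_iff)
  have sols: "is_sol g {0..T} (\<lambda>t. phi t u g)" for u
    using is_sol_subset[OF phi_is_sol[OF U]] by auto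
  show ?thesis
  proof (rule is_sol_uniform_convergence[where gk="\<lambda>k. g" and B="max B1 B2" and v=v])
    show "(\<lambda>k. phi 0 (w k) g) \<longlonglongrightarrow> v" using w phi_0[OF U] by simp
    show "\<forall>t\<in>{0..T}. z t = phi t v g" if "is_sol g {0..T} z" "z 0 = v" for z
      using phi_unique[OF U T that] by blast
  qed (use T gc B sols in \<open>auto intro: uniform_limit_const\<close>)
qed

section \<open>Asymptotically periodic equations\<close>

locale asymptotically_periodic_regular =
  fixes \<tau> :: real and f P R :: "real \<Rightarrow> real \<Rightarrow> real"
  assumes period_pos: "\<tau> > 0"
    and cont_f: "cont2 f" and cont_P: "cont2 P"
    and decomp: "\<And>t x. f t x = P t x + R t x"
    and periodic: "\<And>t x. P (t + \<tau>) x = P t x"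
    and remainder_vanishes: "\<And>K e. compact K \<Longrightarrow> e > 0 \<Longrightarrow> \<exists>T. \<forall>t\<ge>T. \<forall>x\<in>K. \<bar>R t x\<bar> < e"
    and regular: "positively_regular f"
begin

lemma periodic_multiple: "P (t + real n * \<tau>) x = P t x"
proof (induction n arbitrary: t)
  case (Suc n)
  have "P (t + real (Suc n) * \<tau>) x = P ((t + real n * \<tau>) + \<tau>) x" by (simp add: algebra_simps)
  then show ?case using periodic Suc by simp
qed simp

lemma shifts_converge_to_periodic_part:
  fixes n :: "nat \<Rightarrow> nat" and K :: "(real \<times> real) set"
  assumes n: "filterlim n at_top sequentially" and K: "compact K"
  shows "uniform_limit K (\<lambda>k (t, x). tshift f (real (n k) * \<tau>) t x) (\<lambda>(t, x). P t x) sequentially"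
proof (rule uniform_limitI)
  fix e :: real assume "e > 0"
  obtain r where r: "\<And>p. p \<in> K \<Longrightarrow> norm p \<le> r"
    using compact_imp_bounded[OF K] unfolding bounded_iff by blast
  obtain T0 where T0: "\<And>t x. t \<ge> T0 \<Longrightarrow> x \<in> {-r..r} \<Longrightarrow> \<bar>R t x\<bar> < e"
    using remainder_vanishes[OF compact_Icc \<open>e > 0\<close>] by blast
  obtain N :: nat where N: "\<bar>T0\<bar> + \<bar>r\<bar> \<le> real N * \<tau>"
    using real_arch_simple[of "(\<bar>T0\<bar> + \<bar>r\<bar>) / \<tau>"] period_pos by (auto simp: field_simps)
  have "\<forall>\<^sub>F k in sequentially. N \<le> n k" using n unfolding filterlim_at_top by blast
  then show "\<forall>\<^sub>F k in sequentially. \<forall>p\<in>K.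
      dist ((\<lambda>(t, x). tshift f (real (n k) * \<tau>) t x) p) ((\<lambda>(t, x). P t x) p) < e"
  proof eventually_elim
    case (elim k)
    show ?case
    proof (clarify)
      fix t x assume "(t, x) \<in> K"
      then have "\<bar>t\<bar> \<le> r" "\<bar>x\<bar> \<le> r"
        using r norm_fst_le[of t x] norm_snd_le[of x t] by fastforce+
      moreover have "real N * \<tau> \<le> real (n k) * \<tau>" using elim period_pos by simp
      ultimately have "\<bar>R (t + real (n k) * \<tau>) x\<bar> < e" using N by (intro T0) auto
      then show "dist (tshift f (real (n k) * \<tau>) t x) (P t x) < e"
        unfolding tshift_def dist_real_def using decomp periodic_multiple by simp
    qed
  qed
qed

lemma P_in_Hplus: "P \<in> Hplus f"
  unfolding Hplus_def
proof (intro CollectI conjI cont_P allI impI)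
  fix K :: "(real \<times> real) set" and e :: real assume "compact K" "e > 0"
  from uniform_limitD[OF shifts_converge_to_periodic_part[OF filterlim_ident this(1)] this(2)]
  obtain k where "\<forall>p\<in>K. dist ((\<lambda>(t, x). tshift f (real k * \<tau>) t x) p) ((\<lambda>(t, x). P t x) p) < e"
    using eventually_sequentially by auto
  then show "\<exists>h\<ge>0. \<forall>(t, x)\<in>K. \<bar>tshift f h t x - P t x\<bar> < e"
    using period_pos by (intro exI[of _ "real k * \<tau>"]) (auto simp: dist_real_def)
qed

lemma f_in_Hplus: "f \<in> Hplus f"
  unfolding Hplus_def tshift_def using cont_f by (auto intro!: exI[of _ 0])

lemma uniq_global_sol_P: "uniq_global_sol P v"
  using regular P_in_Hplus unfolding positively_regular_def by blast

lemma uniq_global_sol_f: "uniq_global_sol f v"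
  using regular f_in_Hplus unfolding positively_regular_def by blast

end

locale bounded_orbit = asymptotically_periodic_regular +
  fixes u0 M :: real
  assumes orbit_bounded: "\<And>t. t \<ge> 0 \<Longrightarrow> \<bar>phi t u0 f\<bar> \<le> M"
begin

lemma shifted_orbit_converges:
  fixes n :: "nat \<Rightarrow> nat"
  assumes n: "filterlim n at_top sequentially"
    and lim: "(\<lambda>k. phi (real (n k) * \<tau>) u0 f) \<longlonglongrightarrow> v"
  shows "uniform_limit {0..\<tau>} (\<lambda>k s. phi (real (n k) * \<tau> + s) u0 f) (\<lambda>s. phi s v P) sequentially"
proof -
  have "uniform_limit {0..\<tau>} (\<lambda>k s. phi (s + real (n k) * \<tau>) u0 f) (\<lambda>s. phi s v P) sequentially"
  proof (rule is_sol_uniform_convergence[where B=M and gk="\<lambda>k. tshift f (real (n k) * \<tau>)"])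
    show "uniform_limit ({0..\<tau>} \<times> {-M..M}) (\<lambda>k (t, x). tshift f (real (n k) * \<tau>) t x)
        (\<lambda>(t, x). P t x) sequentially"
      by (intro shifts_converge_to_periodic_part n compact_Times compact_Icc)
    show "is_sol (tshift f (real (n k) * \<tau>)) {0..\<tau>} (\<lambda>s. phi (s + real (n k) * \<tau>) u0 f)" for k
      by (intro is_sol_subset[OF is_sol_tshift[OF phi_is_sol[OF uniq_global_sol_f]]])
        (use period_pos in auto)
    show "\<forall>t\<in>{0..\<tau>}. z t = phi t v P" if "is_sol P {0..\<tau>} z" "z 0 = v" for z
      using phi_unique[OF uniq_global_sol_P period_pos that] by blast
  qed (use period_pos cont_P cont_f lim orbit_bounded in \<open>auto intro: cont2_tshift\<close>)
  then show ?thesis by (simp add: add.commute)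
qed

lemma orbit_has_convergent_subseq:
  fixes r :: "nat \<Rightarrow> nat"
  obtains r' l where "strict_mono r'" "(\<lambda>k. phi (real (r (r' k)) * \<tau>) u0 f) \<longlonglongrightarrow> l"
proof -
  have "bounded (range (\<lambda>k. phi (real (r k) * \<tau>) u0 f))"
    using orbit_bounded period_pos unfolding bounded_iff by (auto intro!: exI[of _ M])
  from bounded_imp_convergent_subsequence[OF this] that show thesis by (auto simp: o_def)
qed

lemma sample_defect_tendsto_zero:
  "(\<lambda>n. phi (real (Suc n) * \<tau>) u0 f - phi \<tau> (phi (real n * \<tau>) u0 f) P) \<longlonglongrightarrow> 0"
proof (rule filterlim_sequentially_if_subseqs)
  fix r :: "nat \<Rightarrow> nat" assume r: "strict_mono r"
  obtain r' l where r': "strict_mono r'" and l: "(\<lambda>k. phi (real (r (r' k)) * \<tau>) u0 f) \<longlonglongrightarrow> l"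
    using orbit_has_convergent_subseq .
  have n: "filterlim (\<lambda>k. r (r' k)) at_top sequentially"
    using filterlim_subseq[OF strict_mono_o[OF r r']] by (simp add: o_def)
  have "(\<lambda>k. phi (real (r (r' k)) * \<tau> + \<tau>) u0 f) \<longlonglongrightarrow> phi \<tau> l P"
    using uniform_limit_on_subset[OF shifted_orbit_converges[OF n l], of "{\<tau>}"] period_pos by simp
  moreover have "(\<lambda>k. phi \<tau> (phi (real (r (r' k)) * \<tau>) u0 f) P) \<longlonglongrightarrow> phi \<tau> l P"
    using uniform_limit_on_subset[OF phi_continuous_initial[OF uniq_global_sol_P cont_P period_pos l],
        of "{\<tau>}"] period_pos by simp
  ultimately have "(\<lambda>k. phi (real (r (r' k)) * \<tau> + \<tau>) u0 f
      - phi \<tau> (phi (real (r (r' k)) * \<tau>) u0 f) P) \<longlonglongrightarrow> 0"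
    using tendsto_diff by fastforce
  then show "\<exists>r'. strict_mono r' \<and> (\<lambda>k. phi (real (Suc (r (r' k))) * \<tau>) u0 f
      - phi \<tau> (phi (real (r (r' k)) * \<tau>) u0 f) P) \<longlonglongrightarrow> 0"
    using r' by (auto simp: algebra_simps)
qed

lemma sample_increments_tendsto_zero:
  "(\<lambda>n. phi (real (Suc n) * \<tau>) u0 f - phi (real n * \<tau>) u0 f) \<longlonglongrightarrow> 0"
proof (rule bounded_mono_recursion_increments_tendsto_zero[where T="\<lambda>v. phi \<tau> v P"])
  show "mono (\<lambda>v. phi \<tau> v P)" using phi_mono[OF uniq_global_sol_P] period_pos by (auto intro: monoI)
  show "\<bar>phi (real n * \<tau>) u0 f\<bar> \<le> M" for n using orbit_bounded period_pos by simp
qed (rule sample_defect_tendsto_zero)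

lemma period_differences_tendsto_zero:
  "uniform_limit {0..\<tau>} (\<lambda>n s. phi (real n * \<tau> + s + \<tau>) u0 f - phi (real n * \<tau> + s) u0 f) (\<lambda>_. 0)
    sequentially"
proof (rule filterlim_sequentially_if_subseqs)
  fix r :: "nat \<Rightarrow> nat" assume r: "strict_mono r"
  obtain r' l where r': "strict_mono r'" and l: "(\<lambda>k. phi (real (r (r' k)) * \<tau>) u0 f) \<longlonglongrightarrow> l"
    using orbit_has_convergent_subseq .
  define n where "n k = r (r' k)" for k
  have "strict_mono n" using strict_mono_o[OF r r'] unfolding n_def o_def .
  then have n: "filterlim n at_top sequentially" and n': "filterlim (\<lambda>k. Suc (n k)) at_top sequentially"
    using filterlim_subseq strict_mono_Suc_iff by (fastforce simp: strict_mono_def)+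
  have "(\<lambda>k. phi (real (n k) * \<tau>) u0 f
      + (phi (real (Suc (n k)) * \<tau>) u0 f - phi (real (n k) * \<tau>) u0 f)) \<longlonglongrightarrow> l + 0"
    using l LIMSEQ_subseq_LIMSEQ[OF sample_increments_tendsto_zero \<open>strict_mono n\<close>]
    unfolding n_def o_def by (intro tendsto_add) auto
  then have l': "(\<lambda>k. phi (real (Suc (n k)) * \<tau>) u0 f) \<longlonglongrightarrow> l" by simp
  have "uniform_limit {0..\<tau>} (\<lambda>k s. phi (real (Suc (n k)) * \<tau> + s) u0 f - phi (real (n k) * \<tau> + s) u0 f)
      (\<lambda>s. phi s l P - phi s l P) sequentially"
    using shifted_orbit_converges[OF n' l'] shifted_orbit_converges[OF n l[folded n_def]]
    by (rule uniform_limit_minus)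
  then show "\<exists>r'. strict_mono r' \<and> uniform_limit {0..\<tau>}
      (\<lambda>k s. phi (real (r (r' k)) * \<tau> + s + \<tau>) u0 f - phi (real (r (r' k)) * \<tau> + s) u0 f) (\<lambda>_. 0)
      sequentially"
    using r' unfolding n_def by (auto simp: algebra_simps)
qed

end

theorem theorem1p2:
  fixes \<tau> :: real and f :: "real \<Rightarrow> real \<Rightarrow> real" and u0 :: real
  assumes "\<tau> > 0"
    and "cont2 f"
    and "asymptotically_periodic \<tau> f"
    and "positively_regular f"
    and "bounded ((\<lambda>t. phi t u0 f) ` {0..})"
  shows "((\<lambda>t. \<bar>phi (t + \<tau>) u0 f - phi t u0 f\<bar>) \<longlongrightarrow> 0) at_top"
proof -
  obtain P R where "cont2 P" and decomp: "\<forall>t x. f t x = P t x + R t x"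
    and periodic: "\<forall>t x. P (t + \<tau>) x = P t x"
    and vanishes: "\<forall>K. compact K \<longrightarrow> (\<forall>e>0. \<exists>T. \<forall>t\<ge>T. \<forall>x\<in>K. \<bar>R t x\<bar> < e)"
    using assms(3) unfolding asymptotically_periodic_def by blast
  obtain M where "\<forall>y\<in>(\<lambda>t. phi t u0 f) ` {0..}. norm y \<le> M"
    using assms(5) unfolding bounded_iff by blast
  then have "\<And>t. t \<ge> 0 \<Longrightarrow> \<bar>phi t u0 f\<bar> \<le> M" by simp
  with \<open>cont2 P\<close> decomp periodic vanishes interpret bounded_orbit \<tau> f P R u0 M
    using assms(1,2,4) by unfold_locales blast+
  have "((\<lambda>t. phi (t + \<tau>) u0 f - phi t u0 f) \<longlongrightarrow> 0) at_top"
    using tendsto_at_top_if_uniform_on_periods[OF period_pos] period_differences_tendsto_zero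
    by simp
  then show ?thesis by (rule tendsto_rabs_zero)
qed

end
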